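(* Let $p$ be a prime, $n,m$ positive integers, $0\le s\le n$ an integer, and $F:\mathbb{F}_{p^n}\to\mathbb{F}_{p^m}$ a function. Put $\alpha=p^{2n-m}-p^{n+s-m}$ and $\beta=p^{n+s}+p^{2n-m}-p^{n+s-m}$. Then $F$ is a vectorial $s$-plateaued function if and only if for all $x\in\mathbb{F}_{p^n}$ and $y\in\mathbb{F}_{p^m}$, \[\sum_{a\in\mathbb{F}_{p^n}}\left|\{u\in\mathbb{F}_{p^n} : y=F(u+x-a)-F(u)+F(a)\}\right|=\begin{cases}\alpha & \text{if } y\neq F(x),\\ \beta & \text{if } y=F(x).\end{cases}\]
   Context: $\zeta_p=e^{2\pi i/p}$, $Tr_n(z)=\sum_{i=0}^{n-1}z^{p^i}$ (similarly $Tr_m$). For $b\in\mathbb{F}_{p^m}^*$, $F_b(x)=Tr_m(bF(x))$ with Walsh transform $\widehat{F_b}(a)=\sum_{x\in\mathbb{F}_{p^n}}\zeta_p^{F_b(x)-Tr_n(ax)}$. $F$ is vectorial $s$-plateaued if for every $b\in\mathbb{F}_{p^m}^*$ and every $a\in\mathbb{F}_{p^n}$, $|\widehat{F_b}(a)|\in\{0,p^{(n+s)/2}\}$. *)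

theory Defs
  imports Complex_Main "HOL-Computational_Algebra.Primes"
begin

definition tr :: "nat \<Rightarrow> nat \<Rightarrow> 'a::field \<Rightarrow> 'a" where
  "tr p n z = (\<Sum>i<n. z ^ (p ^ i))"

text \<open>Integer representative of an element of the prime field (least k with of_nat k = t).\<close>
definition fp_val :: "'a::field \<Rightarrow> nat" where
  "fp_val t = (LEAST k. of_nat k = t)"

definition zeta :: "nat \<Rightarrow> complex" where
  "zeta p = cis (2 * pi / real p)"

definition walsh :: "nat \<Rightarrow> nat \<Rightarrow> nat \<Rightarrow> ('a::{field,finite} \<Rightarrow> 'b::{field,finite}) \<Rightarrow> 'b \<Rightarrow> 'a \<Rightarrow> complex" where
  "walsh p n m F b a =
     (\<Sum>x\<in>UNIV. zeta p ^ fp_val (tr p m (b * F x)) / zeta p ^ fp_val (tr p n (a * x)))"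

definition vectorial_plateaued :: "nat \<Rightarrow> nat \<Rightarrow> nat \<Rightarrow> nat \<Rightarrow> ('a::{field,finite} \<Rightarrow> 'b::{field,finite}) \<Rightarrow> bool" where
  "vectorial_plateaued p n m s F =
     (\<forall>b::'b. b \<noteq> 0 \<longrightarrow> (\<forall>a::'a. cmod (walsh p n m F b a) \<in> {0, real p powr ((real n + real s) / 2)}))"

end

(*
  Write psi for the canonical additive character z |-> zeta_p^Tr(z), f_b = psi_m(b F(.)) for the
  components of F and W_b for their Walsh (= Fourier) transforms. The second-order sum
  S_b(x) = sum_{a,u} psi_m(b (F(u+x-a) - F(u) + F(a))) is the triple convolution of f_b,
  conj f_b and f_b, so its Fourier transform is |W_b|^2 W_b; as a function of b it is the
  character sum over y of the solution counts N(x,y). Hence F is s-plateaued iff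
  |W_b|^2 W_b = p^(n+s) W_b for all b ~= 0, iff (Fourier inversion in x) S_b = p^(n+s) f_b
  for all b ~= 0, iff (inversion in y) N(x,y) = alpha + p^(n+s) [y = F x]; the frequency
  b = 0 imposes nothing because both sides sum to p^(2n) over y.
*)
theory Submission
  imports Defs "HOL-Computational_Algebra.Polynomial" "HOL-Number_Theory.Cong"
begin

section \<open>Finite fields and the absolute trace\<close>

(* The library's finite_field_power_card_eq_same is stated for the sort finite_field,
   which a type variable of sort {field, finite} does not carry. *)
lemma power_card_eq_self:
  fixes x :: "'a::{field,finite}"
  shows "x ^ card (UNIV::'a set) = x"
proof (cases "x = 0")
  case True
  then show ?thesis
    by (simp add: finite_UNIV_card_ge_0)
next
  case False
  let ?U = "UNIV - {0::'a}"
  have "(\<Prod>y\<in>?U. x * y) = (\<Prod>y\<in>?U. y)"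
    by (rule prod.reindex_bij_witness[of _ "\<lambda>y. y / x" "\<lambda>y. x * y"]) (use False in auto)
  moreover have "(\<Prod>y\<in>?U. x * y) = x ^ card ?U * (\<Prod>y\<in>?U. y)"
    by (simp add: prod.distrib)
  moreover have "(\<Prod>y\<in>?U. y) \<noteq> 0"
    by simp
  ultimately have "x ^ card ?U = 1"
    by simp
  have "card (UNIV::'a set) = Suc (card ?U)"
    using finite_UNIV_card_ge_0[where 'a='a] by (simp add: card_Diff_singleton_if)
  then have "x ^ card (UNIV::'a set) = x ^ card ?U * x"
    by (simp only: power_Suc2)
  with \<open>x ^ card ?U = 1\<close> show ?thesis
    by simp
qed

lemma CHAR_eq_if_card_eq_prime_power:
  assumes "prime p" and "card (UNIV::'a::{field,finite} set) = p ^ n"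
  shows "CHAR('a) = p"
proof -
  (* translation by 1 permutes the field, hence card UNIV * 1 = 0 *)
  have "(\<Sum>x::'a\<in>UNIV. x + 1) = (\<Sum>x\<in>UNIV. x)"
    by (rule sum.reindex_bij_witness[of _ "\<lambda>z. z - 1" "\<lambda>z. z + 1"]) auto
  then have "of_nat (p ^ n) = (0::'a)"
    using assms(2) by (simp add: sum.distrib)
  then have "CHAR('a) dvd p ^ n"
    by (simp only: of_nat_eq_0_iff_char_dvd)
  moreover have "prime CHAR('a)"
    using prime_CHAR_semidom finite_imp_CHAR_pos[OF finite_UNIV] by blast
  ultimately have "CHAR('a) dvd p"
    using prime_dvd_power by blast
  then show ?thesis
    using \<open>prime CHAR('a)\<close> assms(1) primes_dvd_imp_eq by blast
qed

lemma of_nat_power_CHAR_eq_self: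
  assumes "prime CHAR('a::comm_semiring_1)"
  shows "(of_nat k :: 'a) ^ CHAR('a) = of_nat k"
proof (induction k)
  case 0
  show ?case
    using prime_gt_0_nat[OF assms] by (simp add: power_0_left)
next
  case (Suc k)
  then show ?case
    using freshmans_dream[OF assms refl, of "of_nat k" 1] by (simp add: add.commute)
qed

lemma power_CHAR_eq_self_imp_of_nat:
  assumes "prime CHAR('a::field)" and "(t::'a) ^ CHAR('a) = t"
  shows "\<exists>k < CHAR('a). of_nat k = t"
proof -
  let ?p = "CHAR('a)"
  define P :: "'a poly" where "P = monom 1 ?p - [:0, 1:]"
  have poly_P: "poly P x = x ^ ?p - x" for x
    by (simp add: P_def poly_monom)
  obtain k where "?p = Suc (Suc k)"
    using prime_gt_1_nat[OF assms(1)] by (metis less_imp_Suc_add plus_1_eq_Suc)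
  then have "coeff P ?p = 1" and "?p > 1"
    by (simp_all add: P_def)
  then have "P \<noteq> 0"
    by auto
  have "degree P \<le> ?p"
    unfolding P_def by (rule degree_diff_le) (use \<open>?p > 1\<close> in \<open>auto simp: degree_monom_eq\<close>)
  then have "card {x. poly P x = 0} \<le> ?p"
    using card_poly_roots_bound[OF \<open>P \<noteq> 0\<close>] by linarith
  moreover have "inj_on (of_nat :: nat \<Rightarrow> 'a) {..<?p}"
    by (auto simp: inj_on_def of_nat_eq_iff_cong_CHAR cong_def)
  then have "card (of_nat ` {..<?p} :: 'a set) = ?p"
    by (simp add: card_image)
  moreover have "of_nat ` {..<?p} \<subseteq> {x. poly P x = (0::'a)}"
    using of_nat_power_CHAR_eq_self[OF assms(1)] by (auto simp: poly_P)
  ultimately have "of_nat ` {..<?p} = {x. poly P x = (0::'a)}"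
    by (metis card_subset_eq poly_roots_finite[OF \<open>P \<noteq> 0\<close>] le_antisym card_mono)
  moreover have "t \<in> {x. poly P x = 0}"
    using assms(2) by (simp add: poly_P)
  ultimately show ?thesis
    by (metis imageE lessThan_iff)
qed

lemma
  assumes "prime CHAR('a::field)" and "(t::'a) ^ CHAR('a) = t"
  shows fp_val_less_CHAR: "fp_val t < CHAR('a)"
    and of_nat_fp_val: "of_nat (fp_val t) = t"
proof -
  obtain k where k: "k < CHAR('a)" "of_nat k = t"
    using power_CHAR_eq_self_imp_of_nat[OF assms] by blast
  show "of_nat (fp_val t) = t"
    unfolding fp_val_def by (rule LeastI[of _ k]) (use k in simp)
  have "fp_val t \<le> k"
    unfolding fp_val_def by (rule Least_le) (use k in simp)
  with k show "fp_val t < CHAR('a)"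
    by simp
qed

lemma tr_add:
  assumes "prime p" and "CHAR('a::field) = p"
  shows "tr p n ((x::'a) + y) = tr p n x + tr p n y"
proof -
  have "(x + y) ^ (p ^ i) = x ^ (p ^ i) + y ^ (p ^ i)" for i
    using freshmans_dream'[where 'a='a, of "p ^ i" i] assms by simp
  then show ?thesis
    by (simp add: tr_def sum.distrib)
qed

lemma tr_power_CHAR_eq_self:
  assumes "prime p" and "card (UNIV::'a::{field,finite} set) = p ^ n"
  shows "tr p n (z::'a) ^ CHAR('a) = tr p n z"
proof -
  have char: "CHAR('a) = p"
    using CHAR_eq_if_card_eq_prime_power[OF assms] .
  have "tr p n z ^ p = (\<Sum>i<n. z ^ (p ^ Suc i))"
    unfolding tr_def using assms(1) char
    by (simp add: freshmans_dream_sum power_mult[symmetric] mult.commute)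
  also have "\<dots> = (\<Sum>i<Suc n. z ^ (p ^ i)) - z"
    by (subst sum.lessThan_Suc_shift) simp
  also have "\<dots> = tr p n z"
    using power_card_eq_self[of z] assms(2) by (simp add: tr_def)
  finally show ?thesis
    unfolding char .
qed

lemma tr_not_identically_zero:
  assumes "1 < p" and "0 < n" and "p ^ (n - 1) < card (UNIV::'a::{field,finite} set)"
  shows "\<exists>w::'a. tr p n w \<noteq> 0"
proof (rule ccontr)
  assume trivial: "\<nexists>w::'a. tr p n w \<noteq> 0"
  define Q :: "'a poly" where "Q = (\<Sum>i<n. monom 1 (p ^ i))"
  have poly_Q: "poly Q x = tr p n x" for x
    by (simp add: Q_def poly_sum poly_monom tr_def)
  have "coeff Q (p ^ (n - 1)) = (\<Sum>i<n. if p ^ i = p ^ (n - 1) then 1 else 0)"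
    by (simp add: Q_def coeff_sum coeff_monom)
  also have "\<dots> = (\<Sum>i\<in>{n - 1}. 1)"
    using assms(1,2) by (intro sum.mono_neutral_cong_right) (auto simp: power_inject_exp)
  finally have "Q \<noteq> 0"
    by auto
  have "degree Q \<le> p ^ (n - 1)"
  proof (rule degree_le, intro allI impI)
    fix i
    assume "p ^ (n - 1) < i"
    moreover have "p ^ j \<le> p ^ (n - 1)" if "j < n" for j
      using that assms(1) by (intro power_increasing) auto
    ultimately have "p ^ j \<noteq> i" if "j < n" for j
      using that leD by blast
    then show "coeff Q i = 0"
      by (simp add: Q_def coeff_sum coeff_monom)
  qed
  moreover have "{x. poly Q x = 0} = UNIV"
    using trivial by (auto simp: poly_Q)
  ultimately show False
    using card_poly_roots_bound[OF \<open>Q \<noteq> 0\<close>] assms(3) by simp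
qed

section \<open>Additive characters and the Fourier transform\<close>

lemma zeta_power_eq_1_iff:
  assumes "p > 0"
  shows "zeta p ^ k = 1 \<longleftrightarrow> p dvd k"
proof
  assume "zeta p ^ k = 1"
  then have "cos (real k * (2 * pi / real p)) = 1"
    by (metis DeMoivre cis.sel(1) one_complex.sel(1) zeta_def)
  then obtain j :: int where "real k * (2 * pi / real p) = real_of_int j * 2 * pi"
    using cos_one_2pi_int by blast
  then have "real k = real p * real_of_int j"
    using assms by (simp add: divide_simps)
  then have "int k = int p * j"
    by (metis of_int_eq_iff of_int_mult of_int_of_nat_eq)
  then show "p dvd k"
    by (metis dvd_triv_left int_dvd_int_iff)
next
  assume "p dvd k"
  then obtain j where "k = p * j" ..
  moreover have "zeta p ^ p = 1"
    using assms by (simp add: zeta_def DeMoivre)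
  ultimately show "zeta p ^ k = 1"
    by (simp add: power_mult)
qed

lemma zeta_power_mod:
  assumes "p > 0"
  shows "zeta p ^ (k mod p) = zeta p ^ k"
proof -
  have "zeta p ^ (p * (k div p)) = 1"
    using assms by (simp add: zeta_power_eq_1_iff)
  then show ?thesis
    by (metis mult_div_mod_eq mult_1 power_add)
qed

definition psi :: "nat \<Rightarrow> nat \<Rightarrow> 'a::field \<Rightarrow> complex" where
  "psi p n z = zeta p ^ fp_val (tr p n z)"

locale additive_character =
  fixes \<chi> :: "'a::{field,finite} \<Rightarrow> complex"
  assumes char_add: "\<chi> (x + y) = \<chi> x * \<chi> y"
    and norm_char: "norm (\<chi> x) = 1"
    and char_nontrivial: "\<exists>w. \<chi> w \<noteq> 1"
begin

lemma char_zero [simp]: "\<chi> 0 = 1"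
  using char_add[of 0 0] norm_char[of 0] by auto

lemma char_uminus: "\<chi> (- x) = cnj (\<chi> x)"
proof -
  have "\<chi> (- x) * \<chi> x = 1"
    by (simp flip: char_add)
  moreover have "cnj (\<chi> x) * \<chi> x = 1"
    using complex_norm_square[of "\<chi> x"] norm_char[of x] by (simp add: mult.commute)
  moreover have "\<chi> x \<noteq> 0"
    using norm_char[of x] by auto
  ultimately show ?thesis
    by (metis mult_cancel_right)
qed

lemma char_uminus_eq_inverse: "\<chi> (- x) = inverse (\<chi> x)"
  by (metis char_add char_zero inverse_unique add.right_inverse)

lemma sum_char_mult: "(\<Sum>w\<in>UNIV. \<chi> (w * c)) = (if c = 0 then of_nat (card (UNIV::'a set)) else 0)"
proof (cases "c = 0")
  case False
  obtain w0 where "\<chi> w0 \<noteq> 1"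
    using char_nontrivial by blast
  have rescale: "(\<Sum>w\<in>UNIV. \<chi> (w * c)) = (\<Sum>w\<in>UNIV. \<chi> w)"
    by (rule sum.reindex_bij_witness[of _ "\<lambda>z. z / c" "\<lambda>z. z * c"]) (use False in auto)
  have "(\<Sum>w\<in>UNIV. \<chi> w) = (\<Sum>w\<in>UNIV. \<chi> (w + w0))"
    by (rule sum.reindex_bij_witness[of _ "\<lambda>z. z + w0" "\<lambda>z. z - w0"]) auto
  also have "\<dots> = (\<Sum>w\<in>UNIV. \<chi> w) * \<chi> w0"
    by (simp add: char_add sum_distrib_right)
  finally have "(\<Sum>w\<in>UNIV. \<chi> w) = 0"
    using \<open>\<chi> w0 \<noteq> 1\<close> by (metis mult_cancel_left1)
  with False show ?thesis
    by (simp add: rescale)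
qed simp

definition fourier :: "('a \<Rightarrow> complex) \<Rightarrow> 'a \<Rightarrow> complex" where
  "fourier h w = (\<Sum>x\<in>UNIV. h x * \<chi> (- (w * x)))"

lemma fourier_inversion:
  "(\<Sum>w\<in>UNIV. fourier h w * \<chi> (w * y)) = of_nat (card (UNIV::'a set)) * h y"
proof -
  have "\<chi> (- (w * x)) * \<chi> (w * y) = \<chi> (w * (y - x))" for w x
    by (simp add: algebra_simps flip: char_add)
  then have "(\<Sum>w\<in>UNIV. fourier h w * \<chi> (w * y)) = (\<Sum>w\<in>UNIV. \<Sum>x\<in>UNIV. h x * \<chi> (w * (y - x)))"
    by (simp add: fourier_def sum_distrib_right mult.assoc)
  also have "\<dots> = (\<Sum>x\<in>UNIV. h x * (\<Sum>w\<in>UNIV. \<chi> (w * (y - x))))"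
    by (subst sum.swap) (simp add: sum_distrib_left)
  also have "\<dots> = of_nat (card (UNIV::'a set)) * h y"
    by (simp add: sum_char_mult if_distrib cong: if_cong)
  finally show ?thesis .
qed

lemma fourier_inject:
  assumes "fourier h = fourier g"
  shows "h = g"
proof
  fix y
  have "of_nat (card (UNIV::'a set)) * h y = of_nat (card (UNIV::'a set)) * g y"
    using fourier_inversion[of h y] fourier_inversion[of g y] assms by simp
  then show "h y = g y"
    by simp
qed

lemma char_sum_inject:
  assumes "\<And>w. (\<Sum>x\<in>UNIV. h x * \<chi> (w * x)) = (\<Sum>x\<in>UNIV. g x * \<chi> (w * x))"
  shows "h = g"
proof (rule fourier_inject)
  show "fourier h = fourier g"
    using assms[of "- _"] by (simp add: fourier_def fun_eq_iff)
qed

lemma fourier_cmult: "fourier (\<lambda>x. c * h x) w = c * fourier h w"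
  by (simp add: fourier_def sum_distrib_left mult.assoc)

lemma fourier_triple_convolution:
  "fourier (\<lambda>x. \<Sum>a\<in>UNIV. \<Sum>u\<in>UNIV. f (u + x - a) * cnj (f u) * f a) w
     = of_real ((cmod (fourier f w))\<^sup>2) * fourier f w"
proof -
  have shift: "(\<Sum>x\<in>UNIV. f (u + x - a) * \<chi> (- (w * x)))
      = fourier f w * \<chi> (w * u) * \<chi> (- (w * a))" for a u
  proof -
    have "(\<Sum>x\<in>UNIV. f (u + x - a) * \<chi> (- (w * x)))
        = (\<Sum>z\<in>UNIV. f z * \<chi> (- (w * (z - u + a))))"
      by (rule sum.reindex_bij_witness[of _ "\<lambda>z. z - u + a" "\<lambda>x. u + x - a"])
        (auto simp: algebra_simps)
    also have "\<dots> = (\<Sum>z\<in>UNIV. f z * \<chi> (- (w * z)) * \<chi> (w * u) * \<chi> (- (w * a)))"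
      by (simp add: algebra_simps flip: char_add)
    finally show ?thesis
      by (simp add: fourier_def sum_distrib_right)
  qed
  have conj: "(\<Sum>u\<in>UNIV. cnj (f u) * \<chi> (w * u)) = cnj (fourier f w)"
    by (simp add: fourier_def char_uminus)
  have "fourier (\<lambda>x. \<Sum>a\<in>UNIV. \<Sum>u\<in>UNIV. f (u + x - a) * cnj (f u) * f a) w
      = (\<Sum>x\<in>UNIV. \<Sum>a\<in>UNIV. \<Sum>u\<in>UNIV. f (u + x - a) * \<chi> (- (w * x)) * (cnj (f u) * f a))"
    unfolding fourier_def sum_distrib_right by (simp add: mult_ac)
  also have "\<dots> = (\<Sum>a\<in>UNIV. \<Sum>u\<in>UNIV. \<Sum>x\<in>UNIV. f (u + x - a) * \<chi> (- (w * x)) * (cnj (f u) * f a))"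
    by (subst sum.swap) (rule sum.cong[OF refl], rule sum.swap)
  also have "\<dots> = (\<Sum>a\<in>UNIV. \<Sum>u\<in>UNIV. (\<Sum>x\<in>UNIV. f (u + x - a) * \<chi> (- (w * x))) * (cnj (f u) * f a))"
    by (simp add: sum_distrib_right)
  also have "\<dots> = (\<Sum>a\<in>UNIV. \<Sum>u\<in>UNIV. f a * \<chi> (- (w * a)) * (cnj (f u) * \<chi> (w * u)) * fourier f w)"
    by (simp only: shift) (simp add: mult_ac)
  also have "\<dots> = (\<Sum>a\<in>UNIV. f a * \<chi> (- (w * a))) * (\<Sum>u\<in>UNIV. cnj (f u) * \<chi> (w * u)) * fourier f w"
    by (simp only: sum_product, simp only: sum_distrib_right)
  also have "\<dots> = of_real ((cmod (fourier f w))\<^sup>2) * fourier f w"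
    by (simp only: conj fourier_def[symmetric] complex_norm_square)
  finally show ?thesis .
qed

end

lemma psi_add:
  assumes "prime p" and "card (UNIV::'a::{field,finite} set) = p ^ n"
  shows "psi p n ((x::'a) + y) = psi p n x * psi p n y"
proof -
  have char: "CHAR('a) = p"
    using CHAR_eq_if_card_eq_prime_power[OF assms] .
  have "prime CHAR('a)"
    using assms(1) char by simp
  note of_nat_fp_val_tr = of_nat_fp_val[OF this tr_power_CHAR_eq_self[OF assms]]
  have "of_nat (fp_val (tr p n (x + y))) = tr p n x + tr p n y"
    using of_nat_fp_val_tr[of "x + y"] tr_add[OF assms(1) char] by simp
  also have "\<dots> = of_nat (fp_val (tr p n x) + fp_val (tr p n y))"
    by (simp add: of_nat_fp_val_tr)
  finally have "fp_val (tr p n (x + y)) mod p = (fp_val (tr p n x) + fp_val (tr p n y)) mod p"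
    by (simp only: of_nat_eq_iff_cong_CHAR cong_def char)
  then show ?thesis
    unfolding psi_def using assms(1) by (metis power_add zeta_power_mod prime_gt_0_nat)
qed

lemma psi_nontrivial:
  assumes "prime p" and "card (UNIV::'a::{field,finite} set) = p ^ n"
  shows "\<exists>w::'a. psi p n w \<noteq> 1"
proof -
  have char: "CHAR('a) = p"
    using CHAR_eq_if_card_eq_prime_power[OF assms] .
  have "prime CHAR('a)"
    using assms(1) char by simp
  note fp_val_tr = fp_val_less_CHAR[OF this tr_power_CHAR_eq_self[OF assms]]
    of_nat_fp_val[OF this tr_power_CHAR_eq_self[OF assms]]
  have "2 \<le> card (UNIV::'a set)"
    using card_mono[of UNIV "{0::'a, 1}"] by simp
  then have "n > 0"
    using assms(2) by (cases n) auto
  moreover have "p ^ (n - 1) < p ^ n"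
    using \<open>n > 0\<close> prime_gt_1_nat[OF assms(1)] by (intro power_strict_increasing) auto
  ultimately obtain w :: 'a where "tr p n w \<noteq> 0"
    using tr_not_identically_zero prime_gt_1_nat[OF assms(1)] assms(2) by metis
  then have "fp_val (tr p n w) \<noteq> 0"
    using fp_val_tr(2)[of w] by (metis of_nat_0)
  moreover have "fp_val (tr p n w) < p"
    using fp_val_tr(1)[of w] char by simp
  ultimately have "\<not> p dvd fp_val (tr p n w)"
    by (auto dest: dvd_imp_le)
  then show ?thesis
    using assms(1) by (auto simp: psi_def zeta_power_eq_1_iff prime_gt_0_nat)
qed

lemma additive_character_psi:
  assumes "prime p" and "card (UNIV::'a::{field,finite} set) = p ^ n"
  shows "additive_character (psi p n :: 'a \<Rightarrow> complex)"
  by (intro additive_character.intro psi_add[OF assms] psi_nontrivial[OF assms])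
    (simp add: psi_def zeta_def norm_power)

lemma walsh_eq_fourier:
  fixes F :: "'a::{field,finite} \<Rightarrow> 'b::{field,finite}"
  assumes "additive_character (psi p n :: 'a \<Rightarrow> complex)"
  shows "walsh p n m F b w = additive_character.fourier (psi p n) (\<lambda>x. psi p m (b * F x)) w"
  by (simp add: walsh_def psi_def[symmetric] divide_inverse additive_character.fourier_def[OF assms]
      additive_character.char_uminus_eq_inverse[OF assms])

lemma cmod_in_zero_or_iff:
  assumes "0 \<le> r"
  shows "cmod z \<in> {0, r} \<longleftrightarrow> of_real ((cmod z)\<^sup>2) * z = of_real (r\<^sup>2) * z"
proof (cases "z = 0")
  case False
  then have "of_real ((cmod z)\<^sup>2) * z = of_real (r\<^sup>2) * z \<longleftrightarrow> (cmod z)\<^sup>2 = r\<^sup>2"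
    by (metis mult_cancel_right of_real_eq_iff)
  also have "\<dots> \<longleftrightarrow> cmod z = r"
    using assms by (simp add: power2_eq_iff_nonneg)
  finally show ?thesis
    using False by simp
qed simp

section \<open>Second-order sums of a vectorial function\<close>

definition solution_count :: "('a::ab_group_add \<Rightarrow> 'b::ab_group_add) \<Rightarrow> 'a \<Rightarrow> 'b \<Rightarrow> nat" where
  "solution_count F x y = (\<Sum>a\<in>UNIV. card {u. y = F (u + x - a) - F u + F a})"

locale character_pair = A: additive_character \<chi> + B: additive_character \<psi>
  for \<chi> :: "'a::{field,finite} \<Rightarrow> complex" and \<psi> :: "'b::{field,finite} \<Rightarrow> complex"
begin

definition component :: "('a \<Rightarrow> 'b) \<Rightarrow> 'b \<Rightarrow> 'a \<Rightarrow> complex" where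
  "component F b x = \<psi> (b * F x)"

definition second_order_sum :: "('a \<Rightarrow> 'b) \<Rightarrow> 'b \<Rightarrow> 'a \<Rightarrow> complex" where
  "second_order_sum F b x = (\<Sum>a\<in>UNIV. \<Sum>u\<in>UNIV. \<psi> (b * (F (u + x - a) - F u + F a)))"

lemma fourier_second_order_sum:
  "A.fourier (second_order_sum F b) w
     = of_real ((cmod (A.fourier (component F b) w))\<^sup>2) * A.fourier (component F b) w"
proof -
  have "\<psi> (b * (F (u + x - a) - F u + F a))
      = component F b (u + x - a) * cnj (component F b u) * component F b a" for x a u
  proof -
    have "b * (F (u + x - a) - F u + F a) = b * F (u + x - a) + - (b * F u) + b * F a"
      by (simp add: algebra_simps)
    then show ?thesis
      by (simp only: component_def B.char_add B.char_uminus)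
  qed
  then have "second_order_sum F b
      = (\<lambda>x. \<Sum>a\<in>UNIV. \<Sum>u\<in>UNIV. component F b (u + x - a) * cnj (component F b u) * component F b a)"
    by (simp add: fun_eq_iff second_order_sum_def)
  then show ?thesis
    by (simp add: A.fourier_triple_convolution)
qed

lemma plateau_iff_second_order_sum:
  assumes "0 \<le> r"
  shows "(\<forall>w. cmod (A.fourier (component F b) w) \<in> {0, r})
    \<longleftrightarrow> second_order_sum F b = (\<lambda>x. of_real (r\<^sup>2) * component F b x)"
proof -
  have "cmod (A.fourier (component F b) w) \<in> {0, r}
      \<longleftrightarrow> A.fourier (second_order_sum F b) w = A.fourier (\<lambda>x. of_real (r\<^sup>2) * component F b x) w" for w
    by (simp only: cmod_in_zero_or_iff[OF assms] fourier_second_order_sum A.fourier_cmult)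
  then have "(\<forall>w. cmod (A.fourier (component F b) w) \<in> {0, r})
      \<longleftrightarrow> A.fourier (second_order_sum F b) = A.fourier (\<lambda>x. of_real (r\<^sup>2) * component F b x)"
    unfolding fun_eq_iff by blast
  also have "\<dots> \<longleftrightarrow> second_order_sum F b = (\<lambda>x. of_real (r\<^sup>2) * component F b x)"
    by (auto dest: A.fourier_inject)
  finally show ?thesis .
qed

lemma solution_count_char_sum:
  "(\<Sum>y\<in>UNIV. of_nat (solution_count F x y) * \<psi> (b * y)) = second_order_sum F b x"
proof -
  define G where "G a u = F (u + x - a) - F u + F a" for a u
  have "(of_nat (solution_count F x y) :: complex) = (\<Sum>a\<in>UNIV. \<Sum>u\<in>UNIV. if y = G a u then 1 else 0)" for y
    by (simp add: solution_count_def G_def sum.If_cases)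
  then have "(\<Sum>y\<in>UNIV. of_nat (solution_count F x y) * \<psi> (b * y))
      = (\<Sum>y\<in>UNIV. \<Sum>a\<in>UNIV. \<Sum>u\<in>UNIV. if y = G a u then \<psi> (b * y) else 0)"
    by (simp add: sum_distrib_right if_distrib[where f="\<lambda>t. t * _"] cong: if_cong)
  also have "\<dots> = (\<Sum>a\<in>UNIV. \<Sum>u\<in>UNIV. \<Sum>y\<in>UNIV. if y = G a u then \<psi> (b * y) else 0)"
    by (subst sum.swap) (rule sum.cong[OF refl], rule sum.swap)
  also have "\<dots> = second_order_sum F b x"
    by (simp add: second_order_sum_def G_def)
  finally show ?thesis .
qed

lemma solution_count_iff:
  assumes "\<alpha> * real (card (UNIV::'b set)) + D = real (card (UNIV::'a set)) ^ 2"
  shows "(\<forall>y. real (solution_count F x y) = \<alpha> + (if y = F x then D else 0))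
    \<longleftrightarrow> (\<forall>b. b \<noteq> 0 \<longrightarrow> second_order_sum F b x = of_real D * component F b x)"
proof -
  define T where "T y = \<alpha> + (if y = F x then D else 0)" for y
  have T_sum: "(\<Sum>y\<in>UNIV. of_real (T y) * \<psi> (b * y))
      = (if b = 0 then of_nat (card (UNIV::'a set) ^ 2) else of_real D * component F b x)" for b
  proof -
    have "(\<Sum>y\<in>UNIV. of_real (T y) * \<psi> (b * y))
        = (\<Sum>y\<in>UNIV. of_real \<alpha> * \<psi> (y * b) + (if y = F x then of_real D * \<psi> (b * y) else 0))"
      by (rule sum.cong) (auto simp: T_def algebra_simps)
    also have "\<dots> = of_real \<alpha> * (\<Sum>y\<in>UNIV. \<psi> (y * b)) + of_real D * component F b x"
      by (simp add: sum.distrib sum_distrib_left component_def)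
    also have "\<dots> = (if b = 0 then of_nat (card (UNIV::'a set) ^ 2) else of_real D * component F b x)"
      using arg_cong[OF assms, of complex_of_real] by (simp add: B.sum_char_mult component_def algebra_simps)
    finally show ?thesis .
  qed
  have S0: "second_order_sum F 0 x = of_nat (card (UNIV::'a set) ^ 2)"
    by (simp add: second_order_sum_def power2_eq_square)
  have "(\<forall>y. real (solution_count F x y) = T y)
      \<longleftrightarrow> (\<lambda>y. of_nat (solution_count F x y)) = (\<lambda>y. complex_of_real (T y))"
    by (metis (mono_tags, lifting) of_real_eq_iff of_real_of_nat_eq)
  also have "\<dots> \<longleftrightarrow> (\<forall>b. (\<Sum>y\<in>UNIV. of_nat (solution_count F x y) * \<psi> (b * y))
      = (\<Sum>y\<in>UNIV. of_real (T y) * \<psi> (b * y)))"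
  proof
    assume "(\<lambda>y. of_nat (solution_count F x y)) = (\<lambda>y. complex_of_real (T y))"
    then show "\<forall>b. (\<Sum>y\<in>UNIV. of_nat (solution_count F x y) * \<psi> (b * y))
        = (\<Sum>y\<in>UNIV. of_real (T y) * \<psi> (b * y))"
      by (simp add: fun_eq_iff)
  qed (intro B.char_sum_inject, simp)
  also have "\<dots> \<longleftrightarrow> (\<forall>b. b \<noteq> 0 \<longrightarrow> second_order_sum F b x = of_real D * component F b x)"
    by (simp add: solution_count_char_sum T_sum S0)
  finally show ?thesis
    by (simp add: T_def)
qed

end

lemma plateau_parameters_sum:
  assumes "p > 0"
  shows "(real p powr (2 * real n - real m) - real p powr (real n + real s - real m)) * real p ^ m
      + real p powr (real n + real s) = real p ^ (2 * n)"
proof -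
  have "real p powr (2 * real n - real m) - real p powr (real n + real s - real m)
      = (real p ^ (2 * n) - real p ^ (n + s)) / real p ^ m"
    using assms by (simp add: powr_diff diff_divide_distrib flip: powr_realpow)
  moreover have "real p powr (real n + real s) = real p ^ (n + s)"
    using assms by (simp flip: powr_realpow)
  ultimately show ?thesis
    using assms by simp
qed

theorem mainTheorem2:
  fixes p n m s :: nat
    and F :: "'a::{field,finite} \<Rightarrow> 'b::{field,finite}"
  assumes "prime p" and "n > 0" and "m > 0" and "s \<le> n"
    and "card (UNIV::'a set) = p ^ n" and "card (UNIV::'b set) = p ^ m"
  shows "vectorial_plateaued p n m s F \<longleftrightarrow>
    (\<forall>x::'a. \<forall>y::'b.
       real (\<Sum>a\<in>UNIV. card {u::'a. y = F (u + x - a) - F u + F a}) =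
       (if y \<noteq> F x
        then real p powr (2 * real n - real m) - real p powr (real n + real s - real m)
        else real p powr (real n + real s) + real p powr (2 * real n - real m)
               - real p powr (real n + real s - real m)))"
proof -
  interpret character_pair "psi p n :: 'a \<Rightarrow> complex" "psi p m :: 'b \<Rightarrow> complex"
    by (intro character_pair.intro additive_character_psi assms(1,5,6))
  define r where "r = real p powr ((real n + real s) / 2)"
  define D where "D = real p powr (real n + real s)"
  define \<alpha> where "\<alpha> = real p powr (2 * real n - real m) - real p powr (real n + real s - real m)"
  have "0 \<le> r"
    by (simp add: r_def)
  have "r\<^sup>2 = D"
    unfolding r_def D_def power2_eq_square powr_add[symmetric] by simp
  have count: "\<alpha> * real (card (UNIV::'b set)) + D = real (card (UNIV::'a set)) ^ 2"
    using plateau_parameters_sum[OF prime_gt_0_nat[OF assms(1)], of n m s] assms(5,6)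
    by (simp add: \<alpha>_def D_def power_mult[symmetric] mult.commute)
  have "vectorial_plateaued p n m s F
      \<longleftrightarrow> (\<forall>b. b \<noteq> 0 \<longrightarrow> (\<forall>w. cmod (A.fourier (component F b) w) \<in> {0, r}))"
    by (simp add: vectorial_plateaued_def walsh_eq_fourier[OF A.additive_character_axioms]
        component_def[abs_def] r_def)
  also have "\<dots> \<longleftrightarrow> (\<forall>b. b \<noteq> 0 \<longrightarrow> (\<forall>x. second_order_sum F b x = of_real D * component F b x))"
    using plateau_iff_second_order_sum[OF \<open>0 \<le> r\<close>, of F] unfolding \<open>r\<^sup>2 = D\<close> fun_eq_iff
    by blast
  also have "\<dots> \<longleftrightarrow> (\<forall>x y. real (solution_count F x y) = \<alpha> + (if y = F x then D else 0))"
    using solution_count_iff[OF count] by blast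
  finally show ?thesis
    by (simp add: solution_count_def \<alpha>_def D_def add.commute add_diff_eq conj_commute)
qed

end
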